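(* Let $(X,\mathcal{R})$ be an association scheme with rank $d+1\geq 3$. If some relation $R\in\mathcal{R}$ has a connected scheme graph of valency three, then $(X,\mathcal{R})$ is partially metric with respect to $R$; that is, the set of pairs at distance $2$ in the scheme graph of $R$ is a single relation of $\mathcal{R}$.
   Context: A (symmetric) association scheme with rank $d+1$ on a finite set $X$ is a partition $\mathcal{R}=\{R_0,\dots,R_d\}$ of $X\times X$ with $R_0$ the diagonal, each $R_i$ symmetric, and numbers $p^h_{ij}$ such that for every $(x,y)\in R_h$ the number of $z$ with $(x,z)\in R_i$, $(z,y)\in R_j$ equals $p^h_{ij}$. The scheme graph of $R_i$ ($i>0$) is the graph on $X$ with $x\sim y$ iff $(x,y)\in R_i$. The scheme is partially metric with respect to a connected relation $R_1$ if the distance-$2$ relation of the scheme graph of $R_1$ is a relation of the scheme. *)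

theory Defs
  imports Main
begin

definition assoc_scheme :: "'a set \<Rightarrow> ('a \<times> 'a) set set \<Rightarrow> bool" where
  "assoc_scheme X \<R> \<longleftrightarrow>
     finite X \<and>
     (\<forall>R\<in>\<R>. R \<noteq> {}) \<and>
     \<Union>\<R> = X \<times> X \<and>
     (\<forall>R\<in>\<R>. \<forall>S\<in>\<R>. R \<noteq> S \<longrightarrow> R \<inter> S = {}) \<and>
     Id_on X \<in> \<R> \<and>
     (\<forall>R\<in>\<R>. sym R) \<and>
     (\<forall>Ri\<in>\<R>. \<forall>Rj\<in>\<R>. \<forall>Rh\<in>\<R>. \<exists>p::nat. \<forall>(x,y)\<in>Rh.
        card {z\<in>X. (x,z)\<in>Ri \<and> (z,y)\<in>Rj} = p)"

definition scheme_graph_connected :: "'a set \<Rightarrow> ('a \<times> 'a) set \<Rightarrow> bool" where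
  "scheme_graph_connected X R \<longleftrightarrow> (\<forall>x\<in>X. \<forall>y\<in>X. (x,y) \<in> R\<^sup>*)"

definition scheme_graph_valency :: "'a set \<Rightarrow> ('a \<times> 'a) set \<Rightarrow> nat \<Rightarrow> bool" where
  "scheme_graph_valency X R k \<longleftrightarrow> (\<forall>x\<in>X. card {y. (x,y) \<in> R} = k)"

definition dist2_rel :: "('a \<times> 'a) set \<Rightarrow> ('a \<times> 'a) set" where
  "dist2_rel R = {(x,y). (x,y) \<in> R O R \<and> x \<noteq> y \<and> (x,y) \<notin> R}"

definition partially_metric :: "('a \<times> 'a) set set \<Rightarrow> ('a \<times> 'a) set \<Rightarrow> bool" where
  "partially_metric \<R> R \<longleftrightarrow> dist2_rel R \<in> \<R>"

end

theory Submission imports Defs begin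

text \<open>If the distance-2 relation D of the cubic scheme graph were empty, connectivity would make
  every pair of vertices equal or adjacent, leaving only two relations; so D is nonempty. A
  relation of the scheme meeting D lies inside R O R, hence inside D. If two distinct relations
  S, S' met D, then for every edge (x, y) both p^R_{S R} and p^R_{S' R} would be positive, while
  their midpoints are disjoint subsets of the two neighbours of y other than x; so p^R_{S R} = 1.
  Then S restricted to the three neighbours of a vertex is a perfect matching, which is
  impossible on an odd number of points. Hence exactly one relation meets D, and it equals D.\<close>

lemma even_card_if_perfect_matching:
  assumes "finite A"
    and "\<forall>y\<in>A. card {y'\<in>A. E y y'} = 1"
    and "\<And>y y'. E y y' \<Longrightarrow> E y' y"
    and "\<And>y. \<not> E y y"
  shows "even (card A)"
  using assms(1,2)
proof (induction A rule: finite_psubset_induct)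
  case (psubset A)
  show ?case
  proof (cases "A = {}")
    case False
    then obtain y where y: "y \<in> A" by blast
    have "card {z\<in>A. E y z} = 1" using psubset.prems y by simp
    then obtain y' where partner_y: "{z\<in>A. E y z} = {y'}" by (rule card_1_singletonE)
    then have y': "y' \<in> A" "E y y'" by auto
    then have "y' \<noteq> y" using assms(4) by blast
    have "card {z\<in>A. E y' z} = 1" using psubset.prems y' by simp
    moreover have "y \<in> {z\<in>A. E y' z}" using y y' assms(3) by simp
    ultimately have partner_y': "{z\<in>A. E y' z} = {y}" by (metis card_1_singletonE singletonD)
    define A' where "A' = A - {y, y'}"
    have "{z'\<in>A'. E z z'} = {z'\<in>A. E z z'}" if "z \<in> A'" for z
      using that partner_y partner_y' assms(3) unfolding A'_def by blast
    then have "card {z'\<in>A'. E z z'} = 1" if "z \<in> A'" for z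
      using that psubset.prems unfolding A'_def by simp
    moreover have "A' \<subset> A" unfolding A'_def using y by blast
    ultimately have "even (card A')" using psubset.IH by blast
    moreover have "card A = card A' + 2"
    proof -
      have "card {y, y'} \<le> card A" using y y'(1) psubset.hyps by (intro card_mono) auto
      moreover have "card A' = card A - card {y, y'}"
        using y y'(1) psubset.hyps unfolding A'_def by (simp add: card_Diff_subset)
      ultimately show ?thesis using \<open>y' \<noteq> y\<close> by simp
    qed
    ultimately show ?thesis by simp
  qed simp
qed

lemma complete_if_dist2_rel_empty:
  assumes "scheme_graph_connected X R" "R \<subseteq> X \<times> X" "dist2_rel R = {}"
  shows "X \<times> X \<subseteq> Id_on X \<union> R"
proof -
  have RR: "(a, b) \<in> R" if "(a, b) \<in> R O R" "a \<noteq> b" for a b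
    using that assms(3) unfolding dist2_rel_def by blast
  have "(x, y) \<in> Id_on X \<union> R" if "(x, y) \<in> R\<^sup>*" "x \<in> X" for x y
    using that
  proof (induction rule: rtrancl_induct)
    case (step y z)
    then consider "y = x" | "(x, z) \<in> R O R" by blast
    then show ?case
    proof cases
      case 1
      then show ?thesis using \<open>(y, z) \<in> R\<close> by simp
    next
      case 2
      then show ?thesis using RR[of x z] \<open>x \<in> X\<close> by blast
    qed
  qed (simp add: Id_onI)
  then show ?thesis using assms(1) unfolding scheme_graph_connected_def by blast
qed

locale association_scheme =
  fixes X :: "'a set" and \<R> :: "('a \<times> 'a) set set"
  assumes scheme: "assoc_scheme X \<R>"
begin

lemma finite_X: "finite X"
  using scheme by (simp add: assoc_scheme_def)

lemma Id_on_in_scheme: "Id_on X \<in> \<R>"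
  using scheme by (simp add: assoc_scheme_def)

lemma rel_subset: "S \<in> \<R> \<Longrightarrow> S \<subseteq> X \<times> X"
  using scheme unfolding assoc_scheme_def by blast

lemma rel_nonempty: "S \<in> \<R> \<Longrightarrow> S \<noteq> {}"
  using scheme by (simp add: assoc_scheme_def)

lemma rel_eqI: "S \<in> \<R> \<Longrightarrow> T \<in> \<R> \<Longrightarrow> p \<in> S \<Longrightarrow> p \<in> T \<Longrightarrow> S = T"
  using scheme unfolding assoc_scheme_def by blast

lemma rel_symD: "S \<in> \<R> \<Longrightarrow> (x, y) \<in> S \<Longrightarrow> (y, x) \<in> S"
  using scheme unfolding assoc_scheme_def sym_def by blast

lemma rel_cover: "p \<in> X \<times> X \<Longrightarrow> \<exists>S\<in>\<R>. p \<in> S"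
proof -
  assume "p \<in> X \<times> X"
  moreover have "\<Union>\<R> = X \<times> X" using scheme by (simp add: assoc_scheme_def)
  ultimately show ?thesis by blast
qed

lemma rel_irrefl:
  assumes "S \<in> \<R>" "S \<noteq> Id_on X"
  shows "(x, x) \<notin> S"
proof
  assume "(x, x) \<in> S"
  moreover have "(x, x) \<in> Id_on X" using calculation rel_subset[OF assms(1)] by blast
  ultimately show False using rel_eqI[OF assms(1) Id_on_in_scheme] assms(2) by blast
qed

text \<open>For (x, y) \<in> R_h, the cardinality of this set is the intersection number p^h_ij.\<close>
definition midpoints :: "('a \<times> 'a) set \<Rightarrow> ('a \<times> 'a) set \<Rightarrow> 'a \<Rightarrow> 'a \<Rightarrow> 'a set" where
  "midpoints Ri Rj x y = {z\<in>X. (x, z) \<in> Ri \<and> (z, y) \<in> Rj}"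

lemma finite_midpoints: "finite (midpoints Ri Rj x y)"
  using finite_X unfolding midpoints_def by simp

lemma card_midpoints_eq:
  assumes "Ri \<in> \<R>" "Rj \<in> \<R>" "Rh \<in> \<R>" "(x, y) \<in> Rh" "(x', y') \<in> Rh"
  shows "card (midpoints Ri Rj x y) = card (midpoints Ri Rj x' y')"
proof -
  obtain p where "\<forall>(x, y)\<in>Rh. card (midpoints Ri Rj x y) = p"
    using scheme assms(1-3) unfolding assoc_scheme_def midpoints_def by meson
  then show ?thesis using assms(4,5) by (simp add: case_prod_beta' Ball_def)
qed

lemma midpoints_nonempty_transfer:
  assumes "Ri \<in> \<R>" "Rj \<in> \<R>" "Rh \<in> \<R>" "(x, y) \<in> Rh" "(x', y') \<in> Rh"
    and "midpoints Ri Rj x y \<noteq> {}"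
  shows "midpoints Ri Rj x' y' \<noteq> {}"
proof
  assume "midpoints Ri Rj x' y' = {}"
  then have "card (midpoints Ri Rj x y) = 0" using card_midpoints_eq[OF assms(1-5)] by simp
  then show False using assms(6) finite_midpoints by simp
qed

lemma relcomp_saturated:
  assumes "Ri \<in> \<R>" "Rj \<in> \<R>" "S \<in> \<R>" "S \<inter> (Ri O Rj) \<noteq> {}"
  shows "S \<subseteq> Ri O Rj"
proof
  fix q assume "q \<in> S"
  obtain x y where xy: "(x, y) \<in> S" "(x, y) \<in> Ri O Rj" using assms(4) by blast
  then have "midpoints Ri Rj x y \<noteq> {}"
    using rel_subset[OF assms(1)] unfolding midpoints_def by blast
  then have "midpoints Ri Rj (fst q) (snd q) \<noteq> {}"
    using midpoints_nonempty_transfer[OF assms(1-3) xy(1)] \<open>q \<in> S\<close> by simp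
  then obtain z where "(fst q, z) \<in> Ri" "(z, snd q) \<in> Rj" unfolding midpoints_def by blast
  then show "q \<in> Ri O Rj" by (metis prod.collapse relcomp.relcompI)
qed

lemma card_le_2_if_complete:
  assumes "R \<in> \<R>" "X \<times> X \<subseteq> Id_on X \<union> R"
  shows "card \<R> \<le> 2"
proof -
  have "\<R> \<subseteq> {Id_on X, R}"
  proof
    fix S assume S: "S \<in> \<R>"
    then obtain p where "p \<in> S" using rel_nonempty by blast
    then have "p \<in> Id_on X \<union> R" using S rel_subset assms(2) by blast
    then show "S \<in> {Id_on X, R}"
      using rel_eqI[OF S Id_on_in_scheme \<open>p \<in> S\<close>] rel_eqI[OF S assms(1) \<open>p \<in> S\<close>] by blast
  qed
  then have "card \<R> \<le> card {Id_on X, R}" by (simp add: card_mono)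
  also have "\<dots> \<le> 2" by (simp add: card_insert_le_m1)
  finally show ?thesis .
qed

lemma dist2_rel_nonempty:
  assumes "R \<in> \<R>" "scheme_graph_connected X R" "card \<R> \<ge> 3"
  shows "dist2_rel R \<noteq> {}"
proof
  assume "dist2_rel R = {}"
  then have "X \<times> X \<subseteq> Id_on X \<union> R"
    by (rule complete_if_dist2_rel_empty[OF assms(2) rel_subset[OF assms(1)]])
  then show False using card_le_2_if_complete[OF assms(1)] assms(3) by simp
qed

lemma subset_dist2_rel_if_meets:
  assumes "R \<in> \<R>" "S \<in> \<R>" "S \<inter> dist2_rel R \<noteq> {}"
  shows "S \<subseteq> dist2_rel R"
proof -
  have "S \<subseteq> R O R" using relcomp_saturated[OF assms(1,1,2)] assms(3)
    unfolding dist2_rel_def by blast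
  moreover have "S \<noteq> Id_on X" "S \<noteq> R" using assms(3) unfolding dist2_rel_def by auto
  ultimately show ?thesis
    unfolding dist2_rel_def using rel_irrefl[OF assms(2)] rel_eqI[OF assms(2,1)] by blast
qed

lemma midpoints_nonempty_if_meets_relcomp:
  assumes "R \<in> \<R>" "S \<in> \<R>" "S \<inter> (R O R) \<noteq> {}" "(x, y) \<in> R"
  shows "midpoints S R x y \<noteq> {}"
proof -
  obtain u v w where "(u, v) \<in> S" "(u, w) \<in> R" "(w, v) \<in> R" using assms(3) by blast
  then have "v \<in> midpoints S R u w"
    using rel_symD[OF assms(1)] rel_subset[OF assms(1)] unfolding midpoints_def by blast
  then show ?thesis
    using midpoints_nonempty_transfer[OF assms(2,1,1) \<open>(u, w) \<in> R\<close> assms(4)] by blast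
qed

lemma card_midpoints_sum_le:
  assumes "R \<in> \<R>" "scheme_graph_valency X R k"
    and "S \<in> \<R>" "S' \<in> \<R>" "S \<noteq> S'" "S \<noteq> Id_on X" "S' \<noteq> Id_on X" "(x, y) \<in> R"
  shows "card (midpoints S R x y) + card (midpoints S' R x y) \<le> k - 1"
proof -
  let ?N = "{z. (y, z) \<in> R}"
  have yX: "y \<in> X" using assms(8) rel_subset[OF assms(1)] by blast
  have "?N \<subseteq> X" using rel_subset[OF assms(1)] by blast
  then have finN: "finite ?N" using finite_X by (rule finite_subset)
  have "x \<in> ?N" using rel_symD[OF assms(1,8)] by simp
  then have cardN: "card (?N - {x}) = k - 1"
    using assms(2) yX finN unfolding scheme_graph_valency_def by simp
  have "midpoints S R x y \<inter> midpoints S' R x y = {}"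
    using rel_eqI[OF assms(3,4)] assms(5) unfolding midpoints_def by blast
  then have "card (midpoints S R x y) + card (midpoints S' R x y)
      = card (midpoints S R x y \<union> midpoints S' R x y)"
    by (simp add: card_Un_disjoint finite_midpoints)
  also have "\<dots> \<le> card (?N - {x})"
  proof (rule card_mono)
    show "finite (?N - {x})" using finN by simp
    show "midpoints S R x y \<union> midpoints S' R x y \<subseteq> ?N - {x}"
      using rel_irrefl[OF assms(3,6)] rel_irrefl[OF assms(4,7)] rel_symD[OF assms(1)]
      unfolding midpoints_def by blast
  qed
  finally show ?thesis using cardN by simp
qed

lemma unique_rel_meeting_dist2_rel:
  assumes "R \<in> \<R>" "scheme_graph_valency X R 3"
    and "S \<in> \<R>" "S' \<in> \<R>" "S \<inter> dist2_rel R \<noteq> {}" "S' \<inter> dist2_rel R \<noteq> {}"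
  shows "S = S'"
proof (rule ccontr)
  assume "S \<noteq> S'"
  have meets: "T \<inter> (R O R) \<noteq> {}" "T \<noteq> Id_on X" if "T \<inter> dist2_rel R \<noteq> {}" for T
    using that unfolding dist2_rel_def by auto
  have matching: "card (midpoints S R x y) = 1" if "(x, y) \<in> R" for x y
  proof -
    have "card (midpoints S R x y) > 0" "card (midpoints S' R x y) > 0"
      using midpoints_nonempty_if_meets_relcomp[OF assms(1,3) meets(1)[OF assms(5)] that]
        midpoints_nonempty_if_meets_relcomp[OF assms(1,4) meets(1)[OF assms(6)] that]
      by (simp_all add: card_gt_0_iff finite_midpoints)
    then show ?thesis
      using card_midpoints_sum_le[OF assms(1-4) \<open>S \<noteq> S'\<close> meets(2)[OF assms(5)]
          meets(2)[OF assms(6)] that] by simp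
  qed
  obtain u v where "(u, v) \<in> S" using assms(5) by auto
  then have "u \<in> X" using rel_subset[OF assms(3)] by blast
  define A where "A = {y. (u, y) \<in> R}"
  have "card {y'\<in>A. (y, y') \<in> S} = 1" if "y \<in> A" for y
  proof -
    have "{y'\<in>A. (y, y') \<in> S} = midpoints S R y u"
      using rel_symD[OF assms(1)] rel_subset[OF assms(3)] unfolding A_def midpoints_def by blast
    moreover have "(y, u) \<in> R" using that rel_symD[OF assms(1)] unfolding A_def by blast
    ultimately show ?thesis using matching by simp
  qed
  moreover have "A \<subseteq> X" using rel_subset[OF assms(1)] unfolding A_def by blast
  then have "finite A" using finite_X by (rule finite_subset)
  ultimately have "even (card A)"
    using even_card_if_perfect_matching[of A "\<lambda>a b. (a, b) \<in> S"]
      rel_symD[OF assms(3)] rel_irrefl[OF assms(3) meets(2)[OF assms(5)]] by blast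
  moreover have "card A = 3" using assms(2) \<open>u \<in> X\<close> unfolding A_def scheme_graph_valency_def by blast
  ultimately show False by simp
qed

lemma dist2_rel_in_scheme:
  assumes "R \<in> \<R>" "scheme_graph_connected X R" "scheme_graph_valency X R 3" "card \<R> \<ge> 3"
  shows "dist2_rel R \<in> \<R>"
proof -
  have D_sub: "dist2_rel R \<subseteq> X \<times> X"
    using rel_subset[OF assms(1)] unfolding dist2_rel_def by blast
  obtain p where "p \<in> dist2_rel R" using dist2_rel_nonempty[OF assms(1,2,4)] by auto
  then obtain S where S: "S \<in> \<R>" "p \<in> S" and meets: "S \<inter> dist2_rel R \<noteq> {}"
    using rel_cover D_sub by blast
  have "dist2_rel R \<subseteq> S"
  proof
    fix q assume "q \<in> dist2_rel R"
    moreover from this obtain T where "T \<in> \<R>" "q \<in> T" using rel_cover D_sub by blast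
    ultimately show "q \<in> S"
      using unique_rel_meeting_dist2_rel[OF assms(1,3) _ S(1) _ meets] by blast
  qed
  then have "dist2_rel R = S" using subset_dist2_rel_if_meets[OF assms(1) S(1) meets] by blast
  then show ?thesis using S(1) by simp
qed

end

theorem lemma2p3:
  fixes X :: "'a set" and \<R> :: "('a \<times> 'a) set set" and R :: "('a \<times> 'a) set" and d :: nat
  assumes "assoc_scheme X \<R>"
    and "card \<R> = d + 1" and "d + 1 \<ge> 3"
    and "R \<in> \<R>"
    and "scheme_graph_connected X R"
    and "scheme_graph_valency X R 3"
  shows "partially_metric \<R> R"
proof -
  interpret association_scheme X \<R> using assms(1) by unfold_locales
  show ?thesis
    unfolding partially_metric_def using dist2_rel_in_scheme[OF assms(4-6)] assms(2,3) by simp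
qed

end
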